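(* The category $\mathsf{HSLat}$ of Heyting semilattices satisfies the condition (SSH): for every Heyting semilattice $B$, the kernel functor $\mathrm{Ker}_B\colon \mathsf{Pt}_B(\mathsf{HSLat})\to\mathsf{HSLat}$ reflects Huq-commuting pairs of morphisms. Explicitly: given points $(A_1,\alpha_1,\beta_1)$, $(A_2,\alpha_2,\beta_2)$, $(A,\alpha,\beta)$ over $B$ and morphisms of points $v_1\colon(A_1,\alpha_1,\beta_1)\to(A,\alpha,\beta)$, $v_2\colon(A_2,\alpha_2,\beta_2)\to(A,\alpha,\beta)$, if the restrictions $\mathrm{Ker}_B(v_1)\colon \mathrm{Ker}(\alpha_1)\to\mathrm{Ker}(\alpha)$ and $\mathrm{Ker}_B(v_2)\colon\mathrm{Ker}(\alpha_2)\to\mathrm{Ker}(\alpha)$ Huq-commute in $\mathsf{HSLat}$, then $v_1$ and $v_2$ Huq-commute in $\mathsf{Pt}_B(\mathsf{HSLat})$.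
   Context: A Heyting semilattice is a meet-semilattice $(H,\wedge)$ with top element $1$ and a binary operation $\Rightarrow$ such that $x\wedge y\le z$ iff $x\le y\Rightarrow z$; morphisms preserve $1$, $\wedge$ and $\Rightarrow$. $\mathsf{HSLat}$ is the resulting category (a pointed variety, zero object $\{1\}$). For an object $B$, $\mathsf{Pt}_B(\mathsf{HSLat})$ is the category of points over $B$: triples $(A,\alpha,\beta)$ with $\alpha\colon A\to B$, $\beta\colon B\to A$, $\alpha\beta=1_B$; morphisms $f\colon(A,\alpha,\beta)\to(A',\alpha',\beta')$ satisfy $\alpha' f=\alpha$, $f\beta=\beta'$. Its zero object is $(B,1_B,1_B)$. $\mathrm{Ker}_B$ sends $(A,\alpha,\beta)$ to $\mathrm{Ker}(\alpha)$. In a pointed category with finite products, two morphisms $f\colon X\to A$, $g\colon Y\to A$ Huq-commute if there is a morphism $\varphi\colon X\times Y\to A$ with $\varphi\circ(1_X,0)=f$ and $\varphi\circ(0,1_Y)=g$. *)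

theory Defs
  imports Main
begin

record 'a hsl =
  hcarrier :: "'a set"
  hmeet :: "'a \<Rightarrow> 'a \<Rightarrow> 'a"
  himp :: "'a \<Rightarrow> 'a \<Rightarrow> 'a"
  htop :: 'a

text \<open>Meet-semilattice with top (order: x \<le> y iff x \<and> y = x) plus an implication
  with x \<and> y \<le> z iff x \<le> y \<Rightarrow> z.\<close>
definition is_hsl :: "'a hsl \<Rightarrow> bool" where
  "is_hsl H \<longleftrightarrow>
     htop H \<in> hcarrier H \<and>
     (\<forall>x\<in>hcarrier H. \<forall>y\<in>hcarrier H. hmeet H x y \<in> hcarrier H \<and> himp H x y \<in> hcarrier H) \<and>
     (\<forall>x\<in>hcarrier H. \<forall>y\<in>hcarrier H. \<forall>z\<in>hcarrier H.
        hmeet H (hmeet H x y) z = hmeet H x (hmeet H y z)) \<and>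
     (\<forall>x\<in>hcarrier H. \<forall>y\<in>hcarrier H. hmeet H x y = hmeet H y x) \<and>
     (\<forall>x\<in>hcarrier H. hmeet H x x = x) \<and>
     (\<forall>x\<in>hcarrier H. hmeet H x (htop H) = x) \<and>
     (\<forall>x\<in>hcarrier H. \<forall>y\<in>hcarrier H. \<forall>z\<in>hcarrier H.
        (hmeet H (hmeet H x y) z = hmeet H x y) \<longleftrightarrow> (hmeet H x (himp H y z) = x))"

definition hsl_hom :: "'a hsl \<Rightarrow> 'b hsl \<Rightarrow> ('a \<Rightarrow> 'b) \<Rightarrow> bool" where
  "hsl_hom H K f \<longleftrightarrow>
     (\<forall>x\<in>hcarrier H. f x \<in> hcarrier K) \<and>
     f (htop H) = htop K \<and>
     (\<forall>x\<in>hcarrier H. \<forall>y\<in>hcarrier H.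
        f (hmeet H x y) = hmeet K (f x) (f y) \<and> f (himp H x y) = himp K (f x) (f y))"

definition prod_hsl :: "'a hsl \<Rightarrow> 'b hsl \<Rightarrow> ('a \<times> 'b) hsl" where
  "prod_hsl H K =
     \<lparr> hcarrier = hcarrier H \<times> hcarrier K,
       hmeet = (\<lambda>p q. (hmeet H (fst p) (fst q), hmeet K (snd p) (snd q))),
       himp = (\<lambda>p q. (himp H (fst p) (fst q), himp K (snd p) (snd q))),
       htop = (htop H, htop K) \<rparr>"

definition ker_hsl :: "'a hsl \<Rightarrow> 'b hsl \<Rightarrow> ('a \<Rightarrow> 'b) \<Rightarrow> 'a hsl" where
  "ker_hsl A B f = A\<lparr> hcarrier := {x \<in> hcarrier A. f x = htop B} \<rparr>"

text \<open>Pullback A1 \<times>_B A2 of \<alpha>1, \<alpha>2 (the product in Pt_B(HSLat)).\<close>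
definition pb_hsl :: "'a hsl \<Rightarrow> 'b hsl \<Rightarrow> ('a \<Rightarrow> 'c) \<Rightarrow> ('b \<Rightarrow> 'c) \<Rightarrow> ('a \<times> 'b) hsl" where
  "pb_hsl A1 A2 \<alpha>1 \<alpha>2 =
     (prod_hsl A1 A2)\<lparr> hcarrier := {p \<in> hcarrier A1 \<times> hcarrier A2. \<alpha>1 (fst p) = \<alpha>2 (snd p)} \<rparr>"

definition is_point :: "'b hsl \<Rightarrow> 'a hsl \<Rightarrow> ('a \<Rightarrow> 'b) \<Rightarrow> ('b \<Rightarrow> 'a) \<Rightarrow> bool" where
  "is_point B A \<alpha> \<beta> \<longleftrightarrow> is_hsl A \<and> hsl_hom A B \<alpha> \<and> hsl_hom B A \<beta> \<and>
     (\<forall>b\<in>hcarrier B. \<alpha> (\<beta> b) = b)"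

definition pt_hom :: "'b hsl \<Rightarrow> 'a hsl \<Rightarrow> ('a \<Rightarrow> 'b) \<Rightarrow> ('b \<Rightarrow> 'a)
                      \<Rightarrow> 'c hsl \<Rightarrow> ('c \<Rightarrow> 'b) \<Rightarrow> ('b \<Rightarrow> 'c) \<Rightarrow> ('a \<Rightarrow> 'c) \<Rightarrow> bool" where
  "pt_hom B A \<alpha> \<beta> A' \<alpha>' \<beta>' f \<longleftrightarrow> hsl_hom A A' f \<and>
     (\<forall>a\<in>hcarrier A. \<alpha>' (f a) = \<alpha> a) \<and> (\<forall>b\<in>hcarrier B. f (\<beta> b) = \<beta>' b)"

text \<open>Huq-commutation in HSLat of f : X \<rightarrow> Z and g : Y \<rightarrow> Z
  (zero morphisms are constant at the top element).\<close>
definition huq_hsl :: "'x hsl \<Rightarrow> 'y hsl \<Rightarrow> 'z hsl \<Rightarrow> ('x \<Rightarrow> 'z) \<Rightarrow> ('y \<Rightarrow> 'z) \<Rightarrow> bool" where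
  "huq_hsl X Y Z f g \<longleftrightarrow> (\<exists>\<phi>. hsl_hom (prod_hsl X Y) Z \<phi> \<and>
     (\<forall>x\<in>hcarrier X. \<phi> (x, htop Y) = f x) \<and>
     (\<forall>y\<in>hcarrier Y. \<phi> (htop X, y) = g y))"

text \<open>The product is the pullback with
  \<alpha>(a1,a2) = \<alpha>1 a1, \<beta> b = (\<beta>1 b, \<beta>2 b); the zero morphism
  (A1,\<alpha>1,\<beta>1) \<rightarrow> (A2,\<alpha>2,\<beta>2) is \<beta>2 \<circ> \<alpha>1 (it factors through (B,1,1)).\<close>
definition huq_pt :: "'b hsl \<Rightarrow> 'a1 hsl \<Rightarrow> ('a1 \<Rightarrow> 'b) \<Rightarrow> ('b \<Rightarrow> 'a1)
     \<Rightarrow> 'a2 hsl \<Rightarrow> ('a2 \<Rightarrow> 'b) \<Rightarrow> ('b \<Rightarrow> 'a2)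
     \<Rightarrow> 'a hsl \<Rightarrow> ('a \<Rightarrow> 'b) \<Rightarrow> ('b \<Rightarrow> 'a) \<Rightarrow> ('a1 \<Rightarrow> 'a) \<Rightarrow> ('a2 \<Rightarrow> 'a) \<Rightarrow> bool" where
  "huq_pt B A1 \<alpha>1 \<beta>1 A2 \<alpha>2 \<beta>2 A \<alpha> \<beta> v1 v2 \<longleftrightarrow>
     (\<exists>\<phi>. pt_hom B (pb_hsl A1 A2 \<alpha>1 \<alpha>2) (\<lambda>p. \<alpha>1 (fst p)) (\<lambda>b. (\<beta>1 b, \<beta>2 b)) A \<alpha> \<beta> \<phi> \<and>
        (\<forall>a\<in>hcarrier A1. \<phi> (a, \<beta>2 (\<alpha>1 a)) = v1 a) \<and>
        (\<forall>a\<in>hcarrier A2. \<phi> (\<beta>1 (\<alpha>2 a), a) = v2 a))"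

end

theory Submission
  imports Defs
begin

text \<open>
  A cooperator for v1 and v2 in the category of points sends a pair (a1, a2) over b to
  \<open>(E(x, c) \<Rightarrow> y) \<and> (E(y, c) \<Rightarrow> x)\<close>, where \<open>x = v1 a1\<close>, \<open>y = v2 a2\<close>, \<open>c = \<beta> b\<close> and
  \<open>E(u, c) = (u \<Rightarrow> c) \<and> (c \<Rightarrow> u)\<close> lies in the kernel of \<alpha>. On the axes this gives back v1 and
  v2 because \<open>E(c, c) = 1\<close>. Huq-commutation of the kernel restrictions says that for u in
  the image of Ker \<alpha>1 and w in the image of Ker \<alpha>2 one has \<open>u \<Rightarrow> w = w\<close> and \<open>w \<Rightarrow> u = u\<close>.
  This absorption shows that the two biimplications may be replaced by any smaller images k,
  l of kernel elements without changing the value. Choosing k and l below the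
  biimplications of two pairs at once, preservation of meets and implications becomes an
  identity for the single map \<open>(x, y) \<mapsto> (k \<Rightarrow> y) \<and> (l \<Rightarrow> x)\<close>.
\<close>

section \<open>Heyting semilattices\<close>

definition hle :: "'a hsl \<Rightarrow> 'a \<Rightarrow> 'a \<Rightarrow> bool" where
  "hle H x y \<longleftrightarrow> hmeet H x y = x"

definition hbiimp :: "'a hsl \<Rightarrow> 'a \<Rightarrow> 'a \<Rightarrow> 'a" where
  "hbiimp H x y = hmeet H (himp H x y) (himp H y x)"

locale heyting_semilattice =
  fixes H :: "'a hsl"
  assumes is_hsl: "is_hsl H"
begin

abbreviation C where "C \<equiv> hcarrier H"
abbreviation meet (infixl "\<sqinter>" 70) where "x \<sqinter> y \<equiv> hmeet H x y"
abbreviation imp (infixr "\<rightarrow>" 60) where "x \<rightarrow> y \<equiv> himp H x y"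
abbreviation one where "one \<equiv> htop H"
abbreviation le (infix "\<preceq>" 50) where "x \<preceq> y \<equiv> hle H x y"
abbreviation biimp where "biimp x y \<equiv> hbiimp H x y"

lemma one_closed [simp]: "one \<in> C"
  and meet_closed [simp]: "x \<in> C \<Longrightarrow> y \<in> C \<Longrightarrow> x \<sqinter> y \<in> C"
  and imp_closed [simp]: "x \<in> C \<Longrightarrow> y \<in> C \<Longrightarrow> x \<rightarrow> y \<in> C"
  and meet_assoc: "x \<in> C \<Longrightarrow> y \<in> C \<Longrightarrow> z \<in> C \<Longrightarrow> x \<sqinter> y \<sqinter> z = x \<sqinter> (y \<sqinter> z)"
  and meet_commute: "x \<in> C \<Longrightarrow> y \<in> C \<Longrightarrow> x \<sqinter> y = y \<sqinter> x"
  and meet_idem [simp]: "x \<in> C \<Longrightarrow> x \<sqinter> x = x"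
  and meet_one [simp]: "x \<in> C \<Longrightarrow> x \<sqinter> one = x"
  and residuation: "x \<in> C \<Longrightarrow> y \<in> C \<Longrightarrow> z \<in> C \<Longrightarrow>
     x \<sqinter> y \<sqinter> z = x \<sqinter> y \<longleftrightarrow> x \<sqinter> (y \<rightarrow> z) = x"
  using is_hsl unfolding is_hsl_def by (elim conjE; simp)+

lemma one_meet [simp]: "x \<in> C \<Longrightarrow> one \<sqinter> x = x"
  using meet_commute[of one x] by simp

lemma le_refl [simp]: "x \<in> C \<Longrightarrow> x \<preceq> x"
  by (simp add: hle_def)

lemma le_antisym: "x \<in> C \<Longrightarrow> y \<in> C \<Longrightarrow> x \<preceq> y \<Longrightarrow> y \<preceq> x \<Longrightarrow> x = y"
  unfolding hle_def by (metis meet_commute)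

lemma le_trans: "x \<in> C \<Longrightarrow> y \<in> C \<Longrightarrow> z \<in> C \<Longrightarrow> x \<preceq> y \<Longrightarrow> y \<preceq> z \<Longrightarrow> x \<preceq> z"
  unfolding hle_def by (metis meet_assoc)

lemma meet_le1 [simp]: "x \<in> C \<Longrightarrow> y \<in> C \<Longrightarrow> x \<sqinter> y \<preceq> x"
  unfolding hle_def by (metis meet_assoc meet_commute meet_idem)

lemma meet_le2 [simp]: "x \<in> C \<Longrightarrow> y \<in> C \<Longrightarrow> x \<sqinter> y \<preceq> y"
  unfolding hle_def by (simp add: meet_assoc)

lemma le_meet_iff [simp]: "z \<in> C \<Longrightarrow> x \<in> C \<Longrightarrow> y \<in> C \<Longrightarrow> z \<preceq> x \<sqinter> y \<longleftrightarrow> z \<preceq> x \<and> z \<preceq> y"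
  by (metis hle_def le_trans meet_assoc meet_closed meet_le1 meet_le2)

lemma le_one [simp]: "x \<in> C \<Longrightarrow> x \<preceq> one"
  by (simp add: hle_def)

lemma le_imp_iff [simp]: "x \<in> C \<Longrightarrow> y \<in> C \<Longrightarrow> z \<in> C \<Longrightarrow> x \<preceq> y \<rightarrow> z \<longleftrightarrow> x \<sqinter> y \<preceq> z"
  unfolding hle_def using residuation by simp

lemma meet_le_left: "x \<in> C \<Longrightarrow> y \<in> C \<Longrightarrow> z \<in> C \<Longrightarrow> x \<preceq> z \<Longrightarrow> x \<sqinter> y \<preceq> z"
  using le_trans[of "x \<sqinter> y" x z] by simp

lemma meet_le_right: "x \<in> C \<Longrightarrow> y \<in> C \<Longrightarrow> z \<in> C \<Longrightarrow> y \<preceq> z \<Longrightarrow> x \<sqinter> y \<preceq> z"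
  using le_trans[of "x \<sqinter> y" y z] by simp

lemma meet_mono:
  "x \<in> C \<Longrightarrow> y \<in> C \<Longrightarrow> x' \<in> C \<Longrightarrow> y' \<in> C \<Longrightarrow> x \<preceq> x' \<Longrightarrow> y \<preceq> y' \<Longrightarrow> x \<sqinter> y \<preceq> x' \<sqinter> y'"
  using meet_le_left meet_le_right by simp

lemma modus_ponens: "w \<in> C \<Longrightarrow> x \<in> C \<Longrightarrow> y \<in> C \<Longrightarrow> w \<preceq> x \<rightarrow> y \<Longrightarrow> w \<preceq> x \<Longrightarrow> w \<preceq> y"
  by (metis hle_def le_imp_iff)

lemma imp_meet_le: "x \<in> C \<Longrightarrow> y \<in> C \<Longrightarrow> (x \<rightarrow> y) \<sqinter> x \<preceq> y"
  using le_imp_iff[of "x \<rightarrow> y" x y] by simp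

lemma one_imp [simp]: "x \<in> C \<Longrightarrow> one \<rightarrow> x = x"
  by (rule le_antisym) (use imp_meet_le[of one x] in simp_all)

lemma imp_self [simp]: "x \<in> C \<Longrightarrow> x \<rightarrow> x = one"
  by (rule le_antisym) simp_all

lemma imp_one [simp]: "x \<in> C \<Longrightarrow> x \<rightarrow> one = one"
  by (rule le_antisym) simp_all

lemma imp_antimono_left: "x \<in> C \<Longrightarrow> y \<in> C \<Longrightarrow> x' \<in> C \<Longrightarrow> x' \<preceq> x \<Longrightarrow> x \<rightarrow> y \<preceq> x' \<rightarrow> y"
  using le_trans[OF _ _ _ meet_mono[of "x \<rightarrow> y" x' "x \<rightarrow> y" x] imp_meet_le[of x y]] by simp

lemma imp_mono_right: "x \<in> C \<Longrightarrow> y \<in> C \<Longrightarrow> y' \<in> C \<Longrightarrow> y \<preceq> y' \<Longrightarrow> x \<rightarrow> y \<preceq> x \<rightarrow> y'"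
  using le_trans[OF _ _ _ imp_meet_le[of x y]] by simp

lemma eq_iff_same_lower_bounds: "a \<in> C \<Longrightarrow> b \<in> C \<Longrightarrow> (\<And>z. z \<in> C \<Longrightarrow> z \<preceq> a \<longleftrightarrow> z \<preceq> b) \<Longrightarrow> a = b"
  by (meson le_antisym le_refl)

lemma biimp_closed [simp]: "x \<in> C \<Longrightarrow> y \<in> C \<Longrightarrow> biimp x y \<in> C"
  by (simp add: hbiimp_def)

lemma le_biimp_iff: "k \<in> C \<Longrightarrow> x \<in> C \<Longrightarrow> c \<in> C \<Longrightarrow> k \<preceq> biimp x c \<longleftrightarrow> k \<sqinter> x \<preceq> c \<and> k \<sqinter> c \<preceq> x"
  by (simp add: hbiimp_def)

lemma biimp_self [simp]: "x \<in> C \<Longrightarrow> biimp x x = one"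
  by (simp add: hbiimp_def)

lemma le_trans_meet: "w \<in> C \<Longrightarrow> a \<in> C \<Longrightarrow> b \<in> C \<Longrightarrow> t \<in> C \<Longrightarrow> w \<preceq> a \<Longrightarrow> w \<preceq> b \<Longrightarrow> a \<sqinter> b \<preceq> t \<Longrightarrow> w \<preceq> t"
  using le_trans[of w "a \<sqinter> b" t] by simp

lemma le_biimp_meet:
  assumes mem: "x \<in> C" "x' \<in> C" "c \<in> C" "c' \<in> C" "k \<in> C"
    and "k \<preceq> biimp x c" "k \<preceq> biimp x' c'"
  shows "k \<preceq> biimp (x \<sqinter> x') (c \<sqinter> c')"
proof -
  have h: "k \<sqinter> x \<preceq> c" "k \<sqinter> c \<preceq> x" "k \<sqinter> x' \<preceq> c'" "k \<sqinter> c' \<preceq> x'"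
    using assms le_biimp_iff by auto
  define w where "w = k \<sqinter> (x \<sqinter> x')"
  have w: "w \<in> C" "w \<preceq> k" "w \<preceq> x" "w \<preceq> x'"
    using mem by (simp_all add: w_def meet_le_left meet_le_right)
  define v where "v = k \<sqinter> (c \<sqinter> c')"
  have v: "v \<in> C" "v \<preceq> k" "v \<preceq> c" "v \<preceq> c'"
    using mem by (simp_all add: v_def meet_le_left meet_le_right)
  have "w \<preceq> c" "w \<preceq> c'" "v \<preceq> x" "v \<preceq> x'"
    using le_trans_meet[OF w(1) mem(5) mem(1) mem(3) w(2,3) h(1)] le_trans_meet[OF w(1) mem(5) mem(2) mem(4) w(2,4) h(3)]
      le_trans_meet[OF v(1) mem(5) mem(3) mem(1) v(2,3) h(2)] le_trans_meet[OF v(1) mem(5) mem(4) mem(2) v(2,4) h(4)]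
    by this+
  then show ?thesis using mem unfolding le_biimp_iff[OF mem(5) meet_closed[OF mem(1,2)] meet_closed[OF mem(3,4)]]
    by (simp add: w_def v_def)
qed

lemma le_biimp_imp:
  assumes mem: "x \<in> C" "x' \<in> C" "c \<in> C" "c' \<in> C" "k \<in> C"
    and "k \<preceq> biimp x c" "k \<preceq> biimp x' c'"
  shows "k \<preceq> biimp (x \<rightarrow> x') (c \<rightarrow> c')"
proof -
  have h: "k \<sqinter> x \<preceq> c" "k \<sqinter> c \<preceq> x" "k \<sqinter> x' \<preceq> c'" "k \<sqinter> c' \<preceq> x'"
    using assms le_biimp_iff by auto
  define w where "w = k \<sqinter> (x \<rightarrow> x') \<sqinter> c"
  have w: "w \<in> C" "w \<preceq> k" "w \<preceq> x \<rightarrow> x'" "w \<preceq> c"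
    using mem by (simp_all add: w_def meet_le_left meet_le_right del: le_imp_iff)
  have "w \<preceq> x" using le_trans_meet[OF w(1) mem(5,3,1) w(2,4) h(2)] .
  then have "w \<preceq> x'" using modus_ponens[OF w(1) mem(1,2) w(3)] by blast
  then have wc': "w \<preceq> c'" using le_trans_meet[OF w(1) mem(5,2,4) w(2) _ h(3)] by blast
  define v where "v = k \<sqinter> (c \<rightarrow> c') \<sqinter> x"
  have v: "v \<in> C" "v \<preceq> k" "v \<preceq> c \<rightarrow> c'" "v \<preceq> x"
    using mem by (simp_all add: v_def meet_le_left meet_le_right del: le_imp_iff)
  have "v \<preceq> c" using le_trans_meet[OF v(1) mem(5,1,3) v(2,4) h(1)] .
  then have "v \<preceq> c'" using modus_ponens[OF v(1) mem(3,4) v(3)] by blast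
  then have "v \<preceq> x'" using le_trans_meet[OF v(1) mem(5,4,2) v(2) _ h(4)] by blast
  then show ?thesis using mem wc' unfolding le_biimp_iff[OF mem(5) imp_closed[OF mem(1,2)] imp_closed[OF mem(3,4)]]
    by (simp add: w_def v_def)
qed

lemma biimp_le_imp: "x \<in> C \<Longrightarrow> c \<in> C \<Longrightarrow> biimp x c \<preceq> x \<rightarrow> c"
  and biimp_le_imp': "x \<in> C \<Longrightarrow> c \<in> C \<Longrightarrow> biimp x c \<preceq> c \<rightarrow> x"
  unfolding hbiimp_def using meet_le1 meet_le2 imp_closed by blast+

lemma le_biimp_imp_self: "x \<in> C \<Longrightarrow> c \<in> C \<Longrightarrow> x \<preceq> biimp x c \<rightarrow> c"
  using modus_ponens[of "x \<sqinter> biimp x c" x c] meet_le_right[OF _ _ _ biimp_le_imp] by simp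

lemma le_of_meet_cases:
  assumes mem: "w \<in> C" "k \<in> C" "l \<in> C" "c \<in> C"
    and absorb: "l \<rightarrow> (k \<rightarrow> c) \<rightarrow> c = (k \<rightarrow> c) \<rightarrow> c"
    and wk: "w \<sqinter> k \<preceq> c" and wl: "w \<sqinter> l \<preceq> c"
  shows "w \<preceq> c"
proof -
  have "w \<sqinter> l \<sqinter> (k \<rightarrow> c) \<preceq> c"
    using wl meet_le_left[of "w \<sqinter> l" "k \<rightarrow> c" c] mem by simp
  then have "w \<preceq> l \<rightarrow> (k \<rightarrow> c) \<rightarrow> c" using mem by simp
  then have "w \<preceq> (k \<rightarrow> c) \<rightarrow> c" by (simp only: absorb)
  moreover have "w \<preceq> k \<rightarrow> c" using wk mem by simp
  ultimately show ?thesis using modus_ponens[OF mem(1) imp_closed[OF mem(2,4)] mem(4)] by blast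
qed

lemma le_of_meet_cases_double_imp:
  assumes mem: "w \<in> C" "k \<in> C" "l \<in> C" "c \<in> C" "y \<in> C"
    and absorb_l: "l \<rightarrow> (k \<rightarrow> c) \<rightarrow> c = (k \<rightarrow> c) \<rightarrow> c"
    and absorb_k: "k \<rightarrow> ((y \<rightarrow> c) \<rightarrow> c) \<rightarrow> y = ((y \<rightarrow> c) \<rightarrow> c) \<rightarrow> y"
    and wk: "w \<sqinter> k \<preceq> y" and wl: "w \<sqinter> l \<preceq> y"
  shows "w \<preceq> y"
proof -
  define r where "r = y \<rightarrow> c"
  have rC [simp]: "r \<in> C" using mem by (simp add: r_def)
  have "w \<preceq> k \<rightarrow> y" using wk mem by simp
  moreover have "k \<rightarrow> y \<preceq> (r \<rightarrow> c) \<rightarrow> y"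
    using mem imp_mono_right[of k y "(r \<rightarrow> c) \<rightarrow> y"] absorb_k by (simp add: r_def)
  ultimately have w_le: "w \<preceq> (r \<rightarrow> c) \<rightarrow> y"
    using mem le_trans[of w "k \<rightarrow> y" "(r \<rightarrow> c) \<rightarrow> y"] by (simp del: le_imp_iff)
  have yr: "y \<sqinter> r \<preceq> c" using mem imp_meet_le[of y c] meet_commute[of y r] by (simp add: r_def)
  have "w \<sqinter> r \<sqinter> k \<preceq> c" "w \<sqinter> r \<sqinter> l \<preceq> c"
  proof -
    have "w \<sqinter> k \<sqinter> r \<preceq> y \<sqinter> r" "w \<sqinter> l \<sqinter> r \<preceq> y \<sqinter> r"
      using meet_mono[OF meet_closed[OF mem(1,2)] rC mem(5) rC wk le_refl[OF rC]]
        meet_mono[OF meet_closed[OF mem(1,3)] rC mem(5) rC wl le_refl[OF rC]] by this+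
    moreover have "w \<sqinter> r \<sqinter> k = w \<sqinter> k \<sqinter> r" "w \<sqinter> r \<sqinter> l = w \<sqinter> l \<sqinter> r"
      using mem by (simp_all add: meet_assoc meet_commute[of r])
    ultimately show "w \<sqinter> r \<sqinter> k \<preceq> c" "w \<sqinter> r \<sqinter> l \<preceq> c"
      using mem yr le_trans[of _ "y \<sqinter> r" c] by simp_all
  qed
  then have "w \<sqinter> r \<preceq> c" using le_of_meet_cases[OF _ mem(2-4) absorb_l] mem by simp
  then have "w \<preceq> r \<rightarrow> c" using mem by simp
  then show ?thesis using w_le mem modus_ponens[of w "r \<rightarrow> c" y] by simp
qed

definition cross_imp :: "'a \<Rightarrow> 'a \<Rightarrow> 'a \<Rightarrow> 'a \<Rightarrow> 'a" where
  "cross_imp k l x y = (k \<rightarrow> y) \<sqinter> (l \<rightarrow> x)"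

lemma cross_imp_closed [simp]: "k \<in> C \<Longrightarrow> l \<in> C \<Longrightarrow> x \<in> C \<Longrightarrow> y \<in> C \<Longrightarrow> cross_imp k l x y \<in> C"
  by (simp add: cross_imp_def)

lemma cross_imp_meet_le:
  assumes mem: "k \<in> C" "l \<in> C" "x \<in> C" "y \<in> C"
  shows "cross_imp k l x y \<sqinter> k \<preceq> y" "cross_imp k l x y \<sqinter> l \<preceq> x"
proof -
  have "cross_imp k l x y \<preceq> k \<rightarrow> y" "cross_imp k l x y \<preceq> l \<rightarrow> x"
    using mem by (simp_all add: cross_imp_def del: le_imp_iff)
  then show "cross_imp k l x y \<sqinter> k \<preceq> y" "cross_imp k l x y \<sqinter> l \<preceq> x"
    using mem by simp_all
qed

lemma meet_biimp_le:
  assumes mem: "z \<in> C" "k \<in> C" "l \<in> C" "x \<in> C" "y \<in> C" "c \<in> C"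
    and l: "l \<preceq> biimp y c"
    and absorb_l: "l \<rightarrow> (k \<rightarrow> c) \<rightarrow> c = (k \<rightarrow> c) \<rightarrow> c"
    and absorb_k: "k \<rightarrow> ((y \<rightarrow> c) \<rightarrow> c) \<rightarrow> y = ((y \<rightarrow> c) \<rightarrow> c) \<rightarrow> y"
    and zk: "z \<sqinter> k \<preceq> y" and zl: "z \<sqinter> l \<preceq> x"
  shows "z \<sqinter> biimp x c \<preceq> y"
proof (rule le_of_meet_cases_double_imp[OF _ mem(2,3,6,5) absorb_l absorb_k])
  define w where "w = z \<sqinter> biimp x c \<sqinter> l"
  have w: "w \<in> C" "w \<preceq> z \<sqinter> l" "w \<preceq> biimp x c" "w \<preceq> l"
    using mem by (simp_all add: w_def meet_le_left meet_le_right)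
  have "w \<preceq> x" using le_trans[OF w(1) _ mem(4) w(2) zl] mem by simp
  moreover have "w \<preceq> x \<rightarrow> c" using le_trans[OF w(1) _ _ w(3) biimp_le_imp] mem by simp
  ultimately have "w \<preceq> c" using modus_ponens[OF w(1) mem(4,6)] by blast
  moreover have "w \<preceq> c \<rightarrow> y"
    using le_trans[OF w(1) _ _ w(4) le_trans[OF mem(3) _ _ l biimp_le_imp']] mem by simp
  ultimately show "z \<sqinter> biimp x c \<sqinter> l \<preceq> y"
    using modus_ponens[OF w(1) mem(6,5)] unfolding w_def by blast
  have "z \<sqinter> biimp x c \<sqinter> k \<preceq> z \<sqinter> k"
    using meet_mono[OF _ mem(2,1,2) meet_le1 le_refl] mem by simp
  then show "z \<sqinter> biimp x c \<sqinter> k \<preceq> y" using le_trans[OF _ _ mem(5) _ zk] mem by simp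
qed (use mem in simp)

text \<open>The four absorption hypotheses are what Huq-commutation of the kernels provides.\<close>

lemma cross_imp_eq_biimp:
  assumes mem: "k \<in> C" "l \<in> C" "x \<in> C" "y \<in> C" "c \<in> C"
    and k: "k \<preceq> biimp x c" and l: "l \<preceq> biimp y c"
    and "l \<rightarrow> (k \<rightarrow> c) \<rightarrow> c = (k \<rightarrow> c) \<rightarrow> c"
    and "k \<rightarrow> ((y \<rightarrow> c) \<rightarrow> c) \<rightarrow> y = ((y \<rightarrow> c) \<rightarrow> c) \<rightarrow> y"
    and "k \<rightarrow> (l \<rightarrow> c) \<rightarrow> c = (l \<rightarrow> c) \<rightarrow> c"
    and "l \<rightarrow> ((x \<rightarrow> c) \<rightarrow> c) \<rightarrow> x = ((x \<rightarrow> c) \<rightarrow> c) \<rightarrow> x"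
  shows "cross_imp k l x y = cross_imp (biimp x c) (biimp y c) x y"
proof (rule le_antisym)
  define z where "z = cross_imp k l x y"
  have zC: "z \<in> C" using mem by (simp add: z_def)
  have "z \<sqinter> k \<preceq> y" "z \<sqinter> l \<preceq> x"
    using cross_imp_meet_le mem by (simp_all add: z_def)
  then have "z \<sqinter> biimp x c \<preceq> y" "z \<sqinter> biimp y c \<preceq> x"
    using meet_biimp_le[OF zC mem(1,2,3,4,5) l] meet_biimp_le[OF zC mem(2,1,4,3,5) k] assms by blast+
  then show "z \<preceq> cross_imp (biimp x c) (biimp y c) x y"
    using mem zC by (simp add: cross_imp_def)
  show "cross_imp (biimp x c) (biimp y c) x y \<preceq> z"
    unfolding z_def cross_imp_def
    using meet_mono[OF _ _ _ _ imp_antimono_left[OF _ mem(4) mem(1) k] imp_antimono_left[OF _ mem(3) mem(2) l]] mem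
    by simp
qed (use mem in simp_all)

lemma cross_imp_meet:
  assumes "k \<in> C" "l \<in> C" "x \<in> C" "y \<in> C" "x' \<in> C" "y' \<in> C"
  shows "cross_imp k l (x \<sqinter> x') (y \<sqinter> y') = cross_imp k l x y \<sqinter> cross_imp k l x' y'"
  using assms by (intro eq_iff_same_lower_bounds) (auto simp: cross_imp_def)

lemma meet_cross_imp:
  assumes mem: "k \<in> C" "l \<in> C" "x \<in> C" "y \<in> C" "c \<in> C"
    and k: "k \<preceq> biimp x c" and l: "l \<preceq> biimp y c"
  shows "cross_imp k l x y \<sqinter> k = k \<sqinter> y" "cross_imp k l x y \<sqinter> l = l \<sqinter> x"
proof -
  have kx: "k \<sqinter> x \<preceq> c" "k \<sqinter> c \<preceq> x" and ly: "l \<sqinter> y \<preceq> c" "l \<sqinter> c \<preceq> y"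
    using mem k l le_biimp_iff by auto
  have "k \<sqinter> y \<sqinter> l \<preceq> x"
    using le_trans_meet[OF _ mem(1,5,3) _ _ kx(2)] le_trans_meet[OF _ mem(2,4,5) _ _ ly(1)] mem
    by (simp add: meet_le_left meet_le_right)
  then have "k \<sqinter> y \<preceq> cross_imp k l x y" using mem by (simp add: cross_imp_def meet_le_left meet_le_right)
  moreover have "l \<sqinter> x \<sqinter> k \<preceq> y"
    using le_trans_meet[OF _ mem(2,5,4) _ _ ly(2)] le_trans_meet[OF _ mem(1,3,5) _ _ kx(1)] mem
    by (simp add: meet_le_left meet_le_right)
  then have "l \<sqinter> x \<preceq> cross_imp k l x y" using mem by (simp add: cross_imp_def meet_le_left meet_le_right)
  moreover have "cross_imp k l x y \<sqinter> k \<preceq> y" "cross_imp k l x y \<sqinter> l \<preceq> x"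
    using cross_imp_meet_le mem by blast+
  ultimately show "cross_imp k l x y \<sqinter> k = k \<sqinter> y" "cross_imp k l x y \<sqinter> l = l \<sqinter> x"
    using mem by (auto intro!: le_antisym simp: meet_le_left meet_le_right)
qed

lemma cross_imp_imp:
  assumes mem: "k \<in> C" "l \<in> C" "x \<in> C" "y \<in> C" "x' \<in> C" "y' \<in> C" "c \<in> C"
    and k: "k \<preceq> biimp x c" and l: "l \<preceq> biimp y c"
  shows "cross_imp k l (x \<rightarrow> x') (y \<rightarrow> y') = cross_imp k l x y \<rightarrow> cross_imp k l x' y'"
proof (rule eq_iff_same_lower_bounds)
  fix z assume z: "z \<in> C"
  define p where "p = cross_imp k l x y"
  have pC: "p \<in> C" using mem by (simp add: p_def)
  have "z \<sqinter> p \<sqinter> k = z \<sqinter> k \<sqinter> y" "z \<sqinter> p \<sqinter> l = z \<sqinter> l \<sqinter> x"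
    using meet_cross_imp[OF mem(1-4,7) k l] mem z pC by (simp_all add: meet_assoc p_def)
  then show "z \<preceq> cross_imp k l (x \<rightarrow> x') (y \<rightarrow> y') \<longleftrightarrow> z \<preceq> p \<rightarrow> cross_imp k l x' y'"
    using mem z pC by (simp add: cross_imp_def)
qed (use mem in \<open>simp_all add: cross_imp_def\<close>)

end

section \<open>Homomorphisms, kernels and Huq-commutation\<close>

lemma hsl_hom_closed: "hsl_hom H K f \<Longrightarrow> x \<in> hcarrier H \<Longrightarrow> f x \<in> hcarrier K"
  and hsl_hom_top: "hsl_hom H K f \<Longrightarrow> f (htop H) = htop K"
  and hsl_hom_meet: "hsl_hom H K f \<Longrightarrow> x \<in> hcarrier H \<Longrightarrow> y \<in> hcarrier H \<Longrightarrow>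
     f (hmeet H x y) = hmeet K (f x) (f y)"
  and hsl_hom_imp: "hsl_hom H K f \<Longrightarrow> x \<in> hcarrier H \<Longrightarrow> y \<in> hcarrier H \<Longrightarrow>
     f (himp H x y) = himp K (f x) (f y)"
  unfolding hsl_hom_def by blast+

lemma hsl_hom_biimp:
  "is_hsl H \<Longrightarrow> hsl_hom H K f \<Longrightarrow> x \<in> hcarrier H \<Longrightarrow> y \<in> hcarrier H \<Longrightarrow>
     f (hbiimp H x y) = hbiimp K (f x) (f y)"
  by (simp add: hbiimp_def hsl_hom_meet hsl_hom_imp
      heyting_semilattice.imp_closed[OF heyting_semilattice.intro])

lemma is_hsl_subalgebra:
  assumes "is_hsl A" "S \<subseteq> hcarrier A" "htop A \<in> S"
    and "\<And>x y. x \<in> S \<Longrightarrow> y \<in> S \<Longrightarrow> hmeet A x y \<in> S \<and> himp A x y \<in> S"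
  shows "is_hsl (A\<lparr>hcarrier := S\<rparr>)"
proof -
  interpret A: heyting_semilattice A by (rule heyting_semilattice.intro) fact
  have sub: "\<And>x. x \<in> S \<Longrightarrow> x \<in> hcarrier A" using assms(2) by blast
  show ?thesis
    unfolding is_hsl_def using assms(3,4)
    by (intro conjI ballI; simp add: sub) (rule A.meet_assoc A.meet_commute A.residuation; simp add: sub)+
qed

lemma is_hsl_ker_hsl:
  assumes "is_hsl A" "is_hsl B" "hsl_hom A B \<alpha>"
  shows "is_hsl (ker_hsl A B \<alpha>)"
proof -
  interpret A: heyting_semilattice A by (rule heyting_semilattice.intro) fact
  interpret B: heyting_semilattice B by (rule heyting_semilattice.intro) fact
  show ?thesis
    unfolding ker_hsl_def using assms(3)
    by (intro is_hsl_subalgebra[OF assms(1)]) (auto simp: hsl_hom_top hsl_hom_meet hsl_hom_imp)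
qed

lemma huq_hsl_imp_absorb:
  assumes X: "is_hsl X" and Y: "is_hsl Y" and huq: "huq_hsl X Y Z f g"
    and x: "x \<in> hcarrier X" and y: "y \<in> hcarrier Y"
  shows "himp Z (f x) (g y) = g y" "himp Z (g y) (f x) = f x"
proof -
  interpret X: heyting_semilattice X by (rule heyting_semilattice.intro) fact
  interpret Y: heyting_semilattice Y by (rule heyting_semilattice.intro) fact
  obtain \<phi> where \<phi>: "hsl_hom (prod_hsl X Y) Z \<phi>"
    and left: "\<And>x. x \<in> hcarrier X \<Longrightarrow> \<phi> (x, htop Y) = f x"
    and right: "\<And>y. y \<in> hcarrier Y \<Longrightarrow> \<phi> (htop X, y) = g y"
    using huq unfolding huq_hsl_def by blast
  have xC: "(x, htop Y) \<in> hcarrier (prod_hsl X Y)" and yC: "(htop X, y) \<in> hcarrier (prod_hsl X Y)"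
    using x y by (simp_all add: prod_hsl_def)
  show "himp Z (f x) (g y) = g y"
    using hsl_hom_imp[OF \<phi> xC yC] x y by (simp add: prod_hsl_def left right)
  show "himp Z (g y) (f x) = f x"
    using hsl_hom_imp[OF \<phi> yC xC] x y by (simp add: prod_hsl_def left right)
qed

section \<open>The cooperator in the category of points\<close>

locale commuting_kernels =
  fixes B :: "'b hsl"
    and A1 :: "'a1 hsl" and \<alpha>1 :: "'a1 \<Rightarrow> 'b" and \<beta>1 :: "'b \<Rightarrow> 'a1"
    and A2 :: "'a2 hsl" and \<alpha>2 :: "'a2 \<Rightarrow> 'b" and \<beta>2 :: "'b \<Rightarrow> 'a2"
    and A :: "'a hsl" and \<alpha> :: "'a \<Rightarrow> 'b" and \<beta> :: "'b \<Rightarrow> 'a"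
    and v1 :: "'a1 \<Rightarrow> 'a" and v2 :: "'a2 \<Rightarrow> 'a"
  assumes B: "is_hsl B"
    and point1: "is_point B A1 \<alpha>1 \<beta>1"
    and point2: "is_point B A2 \<alpha>2 \<beta>2"
    and point: "is_point B A \<alpha> \<beta>"
    and v1: "pt_hom B A1 \<alpha>1 \<beta>1 A \<alpha> \<beta> v1"
    and v2: "pt_hom B A2 \<alpha>2 \<beta>2 A \<alpha> \<beta> v2"
    and kernels_huq: "huq_hsl (ker_hsl A1 B \<alpha>1) (ker_hsl A2 B \<alpha>2) (ker_hsl A B \<alpha>) v1 v2"
begin

sublocale B: heyting_semilattice B by (rule heyting_semilattice.intro) (rule B)
sublocale A1: heyting_semilattice A1 using point1 by unfold_locales (simp add: is_point_def)
sublocale A2: heyting_semilattice A2 using point2 by unfold_locales (simp add: is_point_def)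
sublocale A: heyting_semilattice A using point by unfold_locales (simp add: is_point_def)

lemma homs: "hsl_hom A1 B \<alpha>1" "hsl_hom B A1 \<beta>1" "hsl_hom A2 B \<alpha>2" "hsl_hom B A2 \<beta>2"
  "hsl_hom A B \<alpha>" "hsl_hom B A \<beta>" "hsl_hom A1 A v1" "hsl_hom A2 A v2"
  using point1 point2 point v1 v2 unfolding is_point_def pt_hom_def by blast+

lemmas hom_closed [simp] = homs[THEN hsl_hom_closed]
lemmas hom_top [simp] = homs[THEN hsl_hom_top]
lemmas hom_meet [simp] = homs[THEN hsl_hom_meet]
lemmas hom_imp [simp] = homs[THEN hsl_hom_imp]
lemmas hom_biimp [simp] =
  hsl_hom_biimp[OF A1.is_hsl homs(1)] hsl_hom_biimp[OF A2.is_hsl homs(3)]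
  hsl_hom_biimp[OF A1.is_hsl homs(7)] hsl_hom_biimp[OF A2.is_hsl homs(8)]

lemma section_simps [simp]:
  "b \<in> B.C \<Longrightarrow> \<alpha>1 (\<beta>1 b) = b" "b \<in> B.C \<Longrightarrow> \<alpha>2 (\<beta>2 b) = b" "b \<in> B.C \<Longrightarrow> \<alpha> (\<beta> b) = b"
  using point1 point2 point unfolding is_point_def by blast+

lemma point_hom_simps [simp]:
  "a1 \<in> A1.C \<Longrightarrow> \<alpha> (v1 a1) = \<alpha>1 a1" "b \<in> B.C \<Longrightarrow> v1 (\<beta>1 b) = \<beta> b"
  "a2 \<in> A2.C \<Longrightarrow> \<alpha> (v2 a2) = \<alpha>2 a2" "b \<in> B.C \<Longrightarrow> v2 (\<beta>2 b) = \<beta> b"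
  using v1 v2 unfolding pt_hom_def by blast+

lemma kernel_images_absorb:
  assumes "k1 \<in> A1.C" "\<alpha>1 k1 = B.one" "k2 \<in> A2.C" "\<alpha>2 k2 = B.one"
  shows "A.imp (v1 k1) (v2 k2) = v2 k2" "A.imp (v2 k2) (v1 k1) = v1 k1"
  using huq_hsl_imp_absorb[OF is_hsl_ker_hsl is_hsl_ker_hsl kernels_huq] assms
    A1.is_hsl A2.is_hsl B homs
  by (simp_all add: ker_hsl_def)

definition cooperator :: "'a1 \<times> 'a2 \<Rightarrow> 'a" where
  "cooperator = (\<lambda>(a1, a2). let c = \<beta> (\<alpha>1 a1) in
     A.cross_imp (A.biimp (v1 a1) c) (A.biimp (v2 a2) c) (v1 a1) (v2 a2))"

lemma cooperator_eq_cross_imp: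
  assumes a: "a1 \<in> A1.C" "a2 \<in> A2.C" "\<alpha>1 a1 = \<alpha>2 a2"
    and k: "k1 \<in> A1.C" "\<alpha>1 k1 = B.one" "k2 \<in> A2.C" "\<alpha>2 k2 = B.one"
    and le: "A.le (v1 k1) (A.biimp (v1 a1) (\<beta> (\<alpha>1 a1)))" "A.le (v2 k2) (A.biimp (v2 a2) (\<beta> (\<alpha>1 a1)))"
  shows "cooperator (a1, a2) = A.cross_imp (v1 k1) (v2 k2) (v1 a1) (v2 a2)"
proof -
  define b where "b = \<alpha>1 a1"
  have b: "b \<in> B.C" "\<alpha>2 a2 = b" using a by (simp_all add: b_def)
  note absorb = kernel_images_absorb[OF _ _ k(3,4)] kernel_images_absorb[OF k(1,2)]
  have "A.imp (v2 k2) (A.imp (A.imp (v1 k1) (\<beta> b)) (\<beta> b)) = A.imp (A.imp (v1 k1) (\<beta> b)) (\<beta> b)"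
    using absorb(2)[of "A1.imp (A1.imp k1 (\<beta>1 b)) (\<beta>1 b)"] k b by simp
  moreover have "A.imp (v1 k1) (A.imp (A.imp (A.imp (v2 a2) (\<beta> b)) (\<beta> b)) (v2 a2)) =
      A.imp (A.imp (A.imp (v2 a2) (\<beta> b)) (\<beta> b)) (v2 a2)"
    using absorb(3)[of "A2.imp (A2.imp (A2.imp a2 (\<beta>2 b)) (\<beta>2 b)) a2"] a b by simp
  moreover have "A.imp (v1 k1) (A.imp (A.imp (v2 k2) (\<beta> b)) (\<beta> b)) = A.imp (A.imp (v2 k2) (\<beta> b)) (\<beta> b)"
    using absorb(3)[of "A2.imp (A2.imp k2 (\<beta>2 b)) (\<beta>2 b)"] k b by simp
  moreover have "A.imp (v2 k2) (A.imp (A.imp (A.imp (v1 a1) (\<beta> b)) (\<beta> b)) (v1 a1)) =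
      A.imp (A.imp (A.imp (v1 a1) (\<beta> b)) (\<beta> b)) (v1 a1)"
    using absorb(2)[of "A1.imp (A1.imp (A1.imp a1 (\<beta>1 b)) (\<beta>1 b)) a1"] a(1) b
    by (simp add: b_def[symmetric])
  ultimately show ?thesis
    using A.cross_imp_eq_biimp[of "v1 k1" "v2 k2" "v1 a1" "v2 a2" "\<beta> b"] a(1,2) k b le
    by (simp add: cooperator_def Let_def b_def[symmetric])
qed

lemma kernel_bound_for_two_pairs:
  assumes "a1 \<in> A1.C" "a1' \<in> A1.C" "a2 \<in> A2.C" "a2' \<in> A2.C"
    and "\<alpha>1 a1 = \<alpha>2 a2" "\<alpha>1 a1' = \<alpha>2 a2'"
  obtains k1 k2 where "k1 \<in> A1.C" "\<alpha>1 k1 = B.one" "k2 \<in> A2.C" "\<alpha>2 k2 = B.one"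
    "A.le (v1 k1) (A.biimp (v1 a1) (\<beta> (\<alpha>1 a1)))" "A.le (v1 k1) (A.biimp (v1 a1') (\<beta> (\<alpha>1 a1')))"
    "A.le (v2 k2) (A.biimp (v2 a2) (\<beta> (\<alpha>1 a1)))" "A.le (v2 k2) (A.biimp (v2 a2') (\<beta> (\<alpha>1 a1')))"
proof
  let ?k1 = "A1.meet (A1.biimp a1 (\<beta>1 (\<alpha>1 a1))) (A1.biimp a1' (\<beta>1 (\<alpha>1 a1')))"
  let ?k2 = "A2.meet (A2.biimp a2 (\<beta>2 (\<alpha>2 a2))) (A2.biimp a2' (\<beta>2 (\<alpha>2 a2')))"
  show "?k1 \<in> A1.C" "\<alpha>1 ?k1 = B.one" "?k2 \<in> A2.C" "\<alpha>2 ?k2 = B.one"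
    using assms by simp_all
  show "A.le (v1 ?k1) (A.biimp (v1 a1) (\<beta> (\<alpha>1 a1)))" "A.le (v1 ?k1) (A.biimp (v1 a1') (\<beta> (\<alpha>1 a1')))"
    "A.le (v2 ?k2) (A.biimp (v2 a2) (\<beta> (\<alpha>1 a1)))" "A.le (v2 ?k2) (A.biimp (v2 a2') (\<beta> (\<alpha>1 a1')))"
    using assms by (simp_all add: A.meet_le_left A.meet_le_right)
qed

lemma cooperator_meet:
  assumes "a1 \<in> A1.C" "a1' \<in> A1.C" "a2 \<in> A2.C" "a2' \<in> A2.C"
    and "\<alpha>1 a1 = \<alpha>2 a2" "\<alpha>1 a1' = \<alpha>2 a2'"
  shows "cooperator (A1.meet a1 a1', A2.meet a2 a2') =
    A.meet (cooperator (a1, a2)) (cooperator (a1', a2'))"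
proof -
  obtain k1 k2 where k: "k1 \<in> A1.C" "\<alpha>1 k1 = B.one" "k2 \<in> A2.C" "\<alpha>2 k2 = B.one"
    and le: "A.le (v1 k1) (A.biimp (v1 a1) (\<beta> (\<alpha>1 a1)))" "A.le (v1 k1) (A.biimp (v1 a1') (\<beta> (\<alpha>1 a1')))"
      "A.le (v2 k2) (A.biimp (v2 a2) (\<beta> (\<alpha>1 a1)))" "A.le (v2 k2) (A.biimp (v2 a2') (\<beta> (\<alpha>1 a1')))"
    using kernel_bound_for_two_pairs[OF assms] .
  have mem: "v1 a1 \<in> A.C" "v1 a1' \<in> A.C" "v2 a2 \<in> A.C" "v2 a2' \<in> A.C"
    "\<beta> (\<alpha>1 a1) \<in> A.C" "\<beta> (\<alpha>1 a1') \<in> A.C" "v1 k1 \<in> A.C" "v2 k2 \<in> A.C"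
    using assms k by simp_all
  have "cooperator (A1.meet a1 a1', A2.meet a2 a2') =
      A.cross_imp (v1 k1) (v2 k2) (A.meet (v1 a1) (v1 a1')) (A.meet (v2 a2) (v2 a2'))"
    using cooperator_eq_cross_imp[OF _ _ _ k] A.le_biimp_meet[OF mem(1,2,5,6,7) le(1,2)]
      A.le_biimp_meet[OF mem(3,4,5,6,8) le(3,4)] assms
    by simp
  also have "\<dots> = A.meet (A.cross_imp (v1 k1) (v2 k2) (v1 a1) (v2 a2))
      (A.cross_imp (v1 k1) (v2 k2) (v1 a1') (v2 a2'))"
    using assms k by (simp add: A.cross_imp_meet)
  also have "\<dots> = A.meet (cooperator (a1, a2)) (cooperator (a1', a2'))"
    using cooperator_eq_cross_imp[OF _ _ _ k] assms le by simp
  finally show ?thesis .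
qed

lemma cooperator_imp:
  assumes "a1 \<in> A1.C" "a1' \<in> A1.C" "a2 \<in> A2.C" "a2' \<in> A2.C"
    and "\<alpha>1 a1 = \<alpha>2 a2" "\<alpha>1 a1' = \<alpha>2 a2'"
  shows "cooperator (A1.imp a1 a1', A2.imp a2 a2') =
    A.imp (cooperator (a1, a2)) (cooperator (a1', a2'))"
proof -
  obtain k1 k2 where k: "k1 \<in> A1.C" "\<alpha>1 k1 = B.one" "k2 \<in> A2.C" "\<alpha>2 k2 = B.one"
    and le: "A.le (v1 k1) (A.biimp (v1 a1) (\<beta> (\<alpha>1 a1)))" "A.le (v1 k1) (A.biimp (v1 a1') (\<beta> (\<alpha>1 a1')))"
      "A.le (v2 k2) (A.biimp (v2 a2) (\<beta> (\<alpha>1 a1)))" "A.le (v2 k2) (A.biimp (v2 a2') (\<beta> (\<alpha>1 a1')))"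
    using kernel_bound_for_two_pairs[OF assms] .
  have mem: "v1 a1 \<in> A.C" "v1 a1' \<in> A.C" "v2 a2 \<in> A.C" "v2 a2' \<in> A.C"
    "\<beta> (\<alpha>1 a1) \<in> A.C" "\<beta> (\<alpha>1 a1') \<in> A.C" "v1 k1 \<in> A.C" "v2 k2 \<in> A.C"
    using assms k by simp_all
  have "cooperator (A1.imp a1 a1', A2.imp a2 a2') =
      A.cross_imp (v1 k1) (v2 k2) (A.imp (v1 a1) (v1 a1')) (A.imp (v2 a2) (v2 a2'))"
    using cooperator_eq_cross_imp[OF _ _ _ k] A.le_biimp_imp[OF mem(1,2,5,6,7) le(1,2)]
      A.le_biimp_imp[OF mem(3,4,5,6,8) le(3,4)] assms
    by simp
  also have "\<dots> = A.imp (A.cross_imp (v1 k1) (v2 k2) (v1 a1) (v2 a2))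
      (A.cross_imp (v1 k1) (v2 k2) (v1 a1') (v2 a2'))"
    using A.cross_imp_imp[OF _ _ _ _ _ _ _ le(1,3)] assms k by simp
  also have "\<dots> = A.imp (cooperator (a1, a2)) (cooperator (a1', a2'))"
    using cooperator_eq_cross_imp[OF _ _ _ k] assms le by simp
  finally show ?thesis .
qed

lemma cooperator_pt_hom:
  "pt_hom B (pb_hsl A1 A2 \<alpha>1 \<alpha>2) (\<lambda>p. \<alpha>1 (fst p)) (\<lambda>b. (\<beta>1 b, \<beta>2 b)) A \<alpha> \<beta> cooperator"
  unfolding pt_hom_def hsl_hom_def pb_hsl_def prod_hsl_def
  by (auto simp: cooperator_meet cooperator_imp)
    (auto simp: cooperator_def Let_def A.cross_imp_def hbiimp_def)

lemma cooperator_left: "a1 \<in> A1.C \<Longrightarrow> cooperator (a1, \<beta>2 (\<alpha>1 a1)) = v1 a1"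
  using A.le_biimp_imp_self[of "v1 a1" "\<beta> (\<alpha>1 a1)"]
  by (simp add: cooperator_def Let_def A.cross_imp_def hle_def A.meet_commute[of "v1 a1"])

lemma cooperator_right: "a2 \<in> A2.C \<Longrightarrow> cooperator (\<beta>1 (\<alpha>2 a2), a2) = v2 a2"
  using A.le_biimp_imp_self[of "v2 a2" "\<beta> (\<alpha>2 a2)"]
  by (simp add: cooperator_def Let_def A.cross_imp_def hle_def)

end

theorem mainTheorem1:
  fixes B :: "'b hsl"
    and A1 :: "'a1 hsl" and \<alpha>1 :: "'a1 \<Rightarrow> 'b" and \<beta>1 :: "'b \<Rightarrow> 'a1"
    and A2 :: "'a2 hsl" and \<alpha>2 :: "'a2 \<Rightarrow> 'b" and \<beta>2 :: "'b \<Rightarrow> 'a2"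
    and A :: "'a hsl" and \<alpha> :: "'a \<Rightarrow> 'b" and \<beta> :: "'b \<Rightarrow> 'a"
    and v1 :: "'a1 \<Rightarrow> 'a" and v2 :: "'a2 \<Rightarrow> 'a"
  assumes "is_hsl B"
    and "is_point B A1 \<alpha>1 \<beta>1"
    and "is_point B A2 \<alpha>2 \<beta>2"
    and "is_point B A \<alpha> \<beta>"
    and "pt_hom B A1 \<alpha>1 \<beta>1 A \<alpha> \<beta> v1"
    and "pt_hom B A2 \<alpha>2 \<beta>2 A \<alpha> \<beta> v2"
    and "huq_hsl (ker_hsl A1 B \<alpha>1) (ker_hsl A2 B \<alpha>2) (ker_hsl A B \<alpha>) v1 v2"
  shows "huq_pt B A1 \<alpha>1 \<beta>1 A2 \<alpha>2 \<beta>2 A \<alpha> \<beta> v1 v2"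
proof -
  interpret commuting_kernels B A1 \<alpha>1 \<beta>1 A2 \<alpha>2 \<beta>2 A \<alpha> \<beta> v1 v2
    using assms by unfold_locales
  show ?thesis
    unfolding huq_pt_def
    using cooperator_pt_hom cooperator_left cooperator_right by blast
qed

end
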